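(* Let $F:\mathbb{R}^d\to\mathbb{R}$ be quadratic with symmetric positive definite Hessian $H_F$, minimizer $w_*$ and $R_F^2=\mathrm{Tr}(H_F)$. Let $(\xi_k)_{k\ge1}$ be i.i.d. zero-centered random fields with $\xi_k^{\mathrm{add}}=\xi_k(0)$, $\mathbb{E}\|\xi_1^{\mathrm{add}}\|^2\le\mathcal{A}<\infty$ and $\mathfrak{C}_{\mathrm{ania}}=\mathbb{E}[\xi_1^{\mathrm{add}}\xi_1^{\mathrm{add}\top}]$. Let $\gamma>0$ with $\gamma R_F^2\le1$, $\eta_0\in\mathbb{R}^d$, and define $\eta_0^0=\eta_0$, $\eta_k^0=(\mathrm{I}_d-\gamma H_F)\eta_{k-1}^0+\gamma\xi_k^{\mathrm{add}}$ for $k\ge1$, and $\overline{\eta}_{K-1}^0=\frac1K\sum_{k=0}^{K-1}\eta_k^0$. Then for every $K\ge1$, $$\big(\mathbb{E}\|H_F^{1/2}\overline{\eta}_{K-1}^0\|^2\big)^{1/2}\le\frac1{\sqrt K}\Big(\frac{\|H_F^{-1/2}\eta_0\|}{\gamma\sqrt K}\wedge\frac{\|\eta_0\|}{\sqrt\gamma}+\sqrt{\mathrm{Tr}(\mathfrak{C}_{\mathrm{ania}}H_F^{-1})}\Big).$$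
   Context: Zero-centered means $\mathbb{E}\xi_k(z)=0$ for every $z$; $a\wedge b=\min(a,b)$. *)

theory Defs
  imports "HOL-Analysis.Analysis" "HOL-Probability.Probability"
begin

definition sym_pos_def :: "real^'n^'n \<Rightarrow> bool" where
  "sym_pos_def A \<longleftrightarrow> transpose A = A \<and> (\<forall>x. x \<noteq> 0 \<longrightarrow> x \<bullet> (A *v x) > 0)"

definition sym_psd :: "real^'n^'n \<Rightarrow> bool" where
  "sym_psd A \<longleftrightarrow> transpose A = A \<and> (\<forall>x. x \<bullet> (A *v x) \<ge> 0)"

definition msqrt :: "real^'n^'n \<Rightarrow> real^'n^'n" where
  "msqrt A = (THE S. sym_psd S \<and> S ** S = A)"

fun eta0_seq :: "real \<Rightarrow> real^'n^'n \<Rightarrow> (nat \<Rightarrow> 'a \<Rightarrow> real^'n) \<Rightarrow> real^'n \<Rightarrow> nat \<Rightarrow> 'a \<Rightarrow> real^'n" where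
  "eta0_seq \<gamma> H xa e0 0 \<omega> = e0"
| "eta0_seq \<gamma> H xa e0 (Suc k) \<omega> =
     (mat 1 - \<gamma> *\<^sub>R H) *v eta0_seq \<gamma> H xa e0 k \<omega> + \<gamma> *\<^sub>R xa (Suc k) \<omega>"

definition eta0_bar :: "real \<Rightarrow> real^'n^'n \<Rightarrow> (nat \<Rightarrow> 'a \<Rightarrow> real^'n) \<Rightarrow> real^'n \<Rightarrow> nat \<Rightarrow> 'a \<Rightarrow> real^'n" where
  "eta0_bar \<gamma> H xa e0 K \<omega> = (1 / real K) *\<^sub>R (\<Sum>k<K. eta0_seq \<gamma> H xa e0 k \<omega>)"

end

theory Submission
  imports Defs
begin

text \<open>
  Diagonalise H = P' diag(l) P with P orthogonal. In the coordinates (P y)_i the recursion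
  decouples into scalar recursions with contraction factor 1 - \<gamma> l_i \<in> [0, 1), because
  \<gamma> l_i \<le> \<gamma> tr H \<le> 1. Hence the i-th coordinate of H^(1/2) times the averaged iterate is a
  combination of (P \<eta>0)_i and of the independent centred noises (P \<xi>_j(0))_i, 1 \<le> j < K, with
  geometric sums as weights; its second moment is the squared bias term plus the sum of the
  squared noise weights times (P C P')_ii, where C is the second moment of \<xi>_1(0). Bounding each
  geometric sum by min(K, 1/(\<gamma> l_i)) bounds the bias part both by |H^(-1/2) \<eta>0|^2/(\<gamma> K)^2 and
  by |\<eta>0|^2/(\<gamma> K), and the noise part by tr(C H^(-1))/K; finally sqrt(a + b) \<le> sqrt a + sqrt b.
\<close>

section \<open>Spectral theorem for real symmetric matrices\<close>

lemma linear_coeff_zero_if_quadratic_nonpos: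
  fixes a b :: real
  assumes "\<And>t. 2 * t * a + t\<^sup>2 * b \<le> 0"
  shows "a = 0"
proof -
  define c where "c = \<bar>b\<bar> + 1"
  have c: "c > 0" "2 * c + b > 0" by (auto simp: c_def)
  have "a\<^sup>2 * (2 * c + b) = c\<^sup>2 * (2 * (a / c) * a + (a / c)\<^sup>2 * b)"
    using c by (simp add: field_simps power2_eq_square)
  also have "\<dots> \<le> 0" using assms[of "a / c"] by (simp add: mult_nonneg_nonpos)
  finally show ?thesis using c by (simp add: mult_le_0_iff)
qed

lemma symmetric_matrix_inner_commute:
  fixes B :: "real^'n^'n"
  assumes "transpose B = B"
  shows "x \<bullet> (B *v y) = (B *v x) \<bullet> y"
  by (metis assms dot_lmul_matrix inner_commute vector_transpose_matrix)

lemma symmetric_matrix_rayleigh_maximizer_eigenvector: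
  fixes B :: "real^'n^'n"
  assumes sym: "transpose B = B" and V: "subspace V" and inv: "\<And>x. x \<in> V \<Longrightarrow> B *v x \<in> V"
    and uV: "u \<in> V" and un: "norm u = 1"
    and max: "\<And>x. x \<in> V \<Longrightarrow> x \<bullet> (B *v x) \<le> (u \<bullet> (B *v u)) * (norm x)\<^sup>2"
  shows "B *v u = (u \<bullet> (B *v u)) *\<^sub>R u"
proof -
  define l where "l = u \<bullet> (B *v u)"
  \<comment> \<open>The Rayleigh quotient is stationary at its maximiser u along every direction orthogonal to it.\<close>
  have orth: "w \<bullet> (B *v u) = 0" if wV: "w \<in> V" and wu: "w \<bullet> u = 0" for w
  proof (rule linear_coeff_zero_if_quadratic_nonpos[where b = "w \<bullet> (B *v w) - l * (norm w)\<^sup>2"])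
    fix t :: real
    have "u + t *\<^sub>R w \<in> V" using uV wV V by (simp add: subspace_add subspace_scale)
    hence "(u + t *\<^sub>R w) \<bullet> (B *v (u + t *\<^sub>R w)) \<le> l * (norm (u + t *\<^sub>R w))\<^sup>2"
      unfolding l_def by (rule max)
    moreover have "(norm (u + t *\<^sub>R w))\<^sup>2 = 1 + t\<^sup>2 * (norm w)\<^sup>2"
      using un wu by (simp only: power2_norm_eq_inner)
        (simp add: norm_eq_sqrt_inner inner_add_left inner_add_right inner_commute power2_eq_square algebra_simps)
    moreover have "(u + t *\<^sub>R w) \<bullet> (B *v (u + t *\<^sub>R w))
        = l + 2 * t * (w \<bullet> (B *v u)) + t\<^sup>2 * (w \<bullet> (B *v w))"
      using symmetric_matrix_inner_commute[OF sym, of u w] l_def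
      by (simp add: matrix_vector_right_distrib matrix_vector_mult_scaleR inner_add_left inner_add_right
          power2_eq_square algebra_simps inner_commute[of "B *v u" w])
    ultimately show "2 * t * (w \<bullet> (B *v u)) + t\<^sup>2 * (w \<bullet> (B *v w) - l * (norm w)\<^sup>2) \<le> 0"
      by (simp add: algebra_simps)
  qed
  define w where "w = B *v u - l *\<^sub>R u"
  have wV: "w \<in> V" unfolding w_def using inv[OF uV] uV V by (simp add: subspace_diff subspace_scale)
  have uu: "u \<bullet> u = 1" using un by (simp add: norm_eq_sqrt_inner)
  have wu: "w \<bullet> u = 0"
    unfolding w_def l_def using uu by (simp add: inner_diff_left inner_diff_right inner_commute)
  have "w \<bullet> w = w \<bullet> (B *v u) - l * (w \<bullet> u)" unfolding w_def by (simp add: inner_diff_right)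
  also have "\<dots> = 0" using orth[OF wV wu] wu by simp
  finally show ?thesis using l_def w_def by simp
qed

lemma symmetric_matrix_eigenvector_in_invariant_subspace:
  fixes B :: "real^'n^'n"
  assumes sym: "transpose B = B" and V: "subspace V" and inv: "\<And>x. x \<in> V \<Longrightarrow> B *v x \<in> V"
    and "x0 \<in> V" "x0 \<noteq> 0"
  obtains u where "u \<in> V" "norm u = 1" "B *v u = (u \<bullet> (B *v u)) *\<^sub>R u"
proof -
  let ?S = "V \<inter> sphere 0 1"
  have "compact ?S"
    by (intro closed_Int_compact closed_subspace V compact_sphere)
  moreover have "x0 /\<^sub>R norm x0 \<in> ?S" using assms(4,5) V by (auto simp: subspace_scale)
  moreover have "continuous_on ?S (\<lambda>x. x \<bullet> (B *v x))"
    by (intro continuous_intros linear_continuous_on matrix_vector_mul_bounded_linear)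
  ultimately obtain u where uS: "u \<in> ?S"
    and umax: "\<And>y. y \<in> ?S \<Longrightarrow> y \<bullet> (B *v y) \<le> u \<bullet> (B *v u)"
    using continuous_attains_sup[of ?S] by blast
  have "x \<bullet> (B *v x) \<le> (u \<bullet> (B *v u)) * (norm x)\<^sup>2" if "x \<in> V" for x
  proof (cases "x = 0")
    case False
    hence "x /\<^sub>R norm x \<in> ?S" using that V by (auto simp: subspace_scale)
    hence "(x /\<^sub>R norm x) \<bullet> (B *v (x /\<^sub>R norm x)) \<le> u \<bullet> (B *v u)" by (rule umax)
    hence "(x \<bullet> (B *v x)) / (norm x)\<^sup>2 \<le> u \<bullet> (B *v u)"
      by (simp add: matrix_vector_mult_scaleR power2_eq_square divide_inverse mult_ac)
    thus ?thesis using False by (simp add: divide_le_eq mult.commute)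
  qed simp
  with uS show ?thesis
    by (intro that[of u] symmetric_matrix_rayleigh_maximizer_eigenvector[OF sym V inv]) auto
qed

lemma subset_span_insert_unit:
  assumes "u \<bullet> u = 1" and "\<And>x. x \<in> V \<Longrightarrow> x - (u \<bullet> x) *\<^sub>R u \<in> span U"
  shows "V \<subseteq> span (insert u U)"
proof
  fix x assume "x \<in> V"
  hence "x - (u \<bullet> x) *\<^sub>R u \<in> span (insert u U)"
    using assms(2) span_mono[of U "insert u U"] by auto
  moreover have "(u \<bullet> x) *\<^sub>R u \<in> span (insert u U)"
    by (intro span_mul span_base) simp
  ultimately show "x \<in> span (insert u U)" using span_add by fastforce
qed

lemma symmetric_matrix_orthonormal_eigenbasis_of_invariant_subspace:
  fixes B :: "real^'n^'n"
  assumes sym: "transpose B = B"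
  shows "subspace V \<Longrightarrow> (\<forall>x\<in>V. B *v x \<in> V) \<Longrightarrow>
    \<exists>U. U \<subseteq> V \<and> finite U \<and> pairwise orthogonal U \<and>
        (\<forall>u\<in>U. norm u = 1 \<and> B *v u = (u \<bullet> (B *v u)) *\<^sub>R u) \<and> V \<subseteq> span U"
proof (induction "dim V" arbitrary: V rule: less_induct)
  case less
  show ?case
  proof (cases "V \<subseteq> {0}")
    case True
    thus ?thesis by (intro exI[of _ "{}"]) auto
  next
    case False
    then obtain x0 where "x0 \<in> V" "x0 \<noteq> 0" by auto
    then obtain u where uV: "u \<in> V" and un: "norm u = 1" and ue: "B *v u = (u \<bullet> (B *v u)) *\<^sub>R u"
      using symmetric_matrix_eigenvector_in_invariant_subspace[OF sym less.prems(1)] less.prems(2)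
      by metis
    have uu: "u \<bullet> u = 1" using un by (simp add: norm_eq_sqrt_inner)
    define W where "W = V \<inter> {x. u \<bullet> x = 0}"
    have sW: "subspace W" unfolding W_def
      by (intro subspace_inter less.prems(1) subspace_hyperplane)
    have iW: "\<forall>x\<in>W. B *v x \<in> W"
    proof
      fix x assume "x \<in> W"
      hence "x \<in> V" and "u \<bullet> x = 0" by (auto simp: W_def)
      moreover have "u \<bullet> (B *v x) = (u \<bullet> (B *v u)) * (u \<bullet> x)"
        by (subst symmetric_matrix_inner_commute[OF sym], subst ue) simp
      ultimately show "B *v x \<in> W" using less.prems(2) by (simp add: W_def)
    qed
    have "u \<notin> W" using uu by (simp add: W_def)
    hence "W \<subset> V" using uV unfolding W_def by blast
    hence "span W \<subset> span V" by (metis span_eq_iff sW less.prems(1))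
    hence "dim W < dim V" by (rule dim_psubset)
    then obtain U where U: "U \<subseteq> W" "finite U" "pairwise orthogonal U"
      "\<forall>u\<in>U. norm u = 1 \<and> B *v u = (u \<bullet> (B *v u)) *\<^sub>R u" "W \<subseteq> span U"
      using less.hyps[OF _ sW iW] by blast
    have "x - (u \<bullet> x) *\<^sub>R u \<in> W" if "x \<in> V" for x
      using that uV less.prems(1) uu by (auto simp: W_def subspace_diff subspace_scale inner_diff_right)
    hence "V \<subseteq> span (insert u U)" using U(5) uu by (intro subset_span_insert_unit) auto
    moreover have "pairwise orthogonal (insert u U)"
      using U(1,3) uu by (auto simp: pairwise_insert W_def orthogonal_def inner_commute)
    ultimately show ?thesis
      using U(1,2,4) uV un ue by (intro exI[of _ "insert u U"]) (auto simp: W_def)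
  qed
qed

definition diag_mat :: "('n \<Rightarrow> real) \<Rightarrow> real^'n^'n" where
  "diag_mat d = (\<chi> i j. if i = j then d i else 0)"

theorem symmetric_matrix_diagonalizable:
  fixes B :: "real^'n^'n"
  assumes sym: "transpose B = B"
  obtains P l where "orthogonal_matrix P" "B = transpose P ** diag_mat l ** P"
proof -
  obtain U where U: "finite U" "pairwise orthogonal U"
      "\<forall>u\<in>U. norm u = 1 \<and> B *v u = (u \<bullet> (B *v u)) *\<^sub>R u" "UNIV \<subseteq> span U"
    using symmetric_matrix_orthonormal_eigenbasis_of_invariant_subspace[OF sym, of UNIV] by auto
  have "independent U"
    using U(2,3) pairwise_orthogonal_independent by force
  hence "card U = dim (span U)" using dim_span_eq_card_independent by metis
  also have "span U = UNIV" using U(4) by auto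
  finally obtain g where g: "bij_betw g (UNIV::'n set) U"
    using finite_same_card_bij[of "UNIV::'n set" U] U(1) by auto
  define P :: "real^'n^'n" where "P = (\<chi> i. g i)"
  define l where "l i = g i \<bullet> (B *v g i)" for i
  have gU: "g i \<in> U" for i using g by (auto simp: bij_betw_def)
  have rows: "row i P = g i" for i by (simp add: P_def row_def vec_eq_iff)
  have P: "orthogonal_matrix P"
    unfolding orthogonal_matrix_orthonormal_rows rows
    using U(2,3) gU g by (auto simp: bij_betw_def inj_on_def pairwise_def) blast
  have "B ** transpose P = transpose P ** diag_mat l"
  proof -
    have "(B ** transpose P) $ a $ i = (B *v g i) $ a" for a i
      by (simp add: matrix_matrix_mult_def matrix_vector_mult_def transpose_def P_def)
    also have "(B *v g i) $ a = l i * g i $ a" for a i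
    proof -
      have "B *v g i = l i *\<^sub>R g i" using U(3) gU[of i] l_def by auto
      thus ?thesis by simp
    qed
    also have "l i * g i $ a = (transpose P ** diag_mat l) $ a $ i" for a i
      by (simp add: matrix_matrix_mult_def transpose_def diag_mat_def P_def if_distrib if_distribR
          cong: if_cong)
    finally show ?thesis by (simp add: vec_eq_iff)
  qed
  hence "B = transpose P ** diag_mat l ** P"
    using P by (metis orthogonal_matrix_def matrix_mul_assoc matrix_mul_rid)
  with P show ?thesis by (rule that)
qed

lemma diag_mat_mult_vec_component [simp]: "(diag_mat d *v x) $ i = d i * x $ i"
proof -
  have "(\<Sum>j\<in>UNIV. (if i = j then d i else 0) * x $ j) = (\<Sum>j\<in>UNIV. if i = j then d i * x $ j else 0)"
    by (rule sum.cong) auto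
  thus ?thesis unfolding diag_mat_def matrix_vector_mult_def by simp
qed

lemma diag_mat_mult: "diag_mat a ** diag_mat b = diag_mat (\<lambda>i. a i * b i)"
proof -
  have "(\<Sum>k\<in>UNIV. (if i = k then a i else 0) * (if k = j then b k else 0))
      = (if i = j then a i * b i else 0)" for i j
    by (subst sum.remove[of _ i]) auto
  thus ?thesis unfolding diag_mat_def matrix_matrix_mult_def by (simp add: vec_eq_iff)
qed

lemma transpose_diag_mat [simp]: "transpose (diag_mat d) = diag_mat d"
  unfolding diag_mat_def transpose_def by (simp add: vec_eq_iff)

lemma diag_mat_const_one [simp]: "diag_mat (\<lambda>_. 1) = mat 1"
  unfolding diag_mat_def mat_def by simp

definition spectral_fun :: "real^'n^'n \<Rightarrow> ('n \<Rightarrow> real) \<Rightarrow> (real \<Rightarrow> real) \<Rightarrow> real^'n^'n" where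
  "spectral_fun P l g = transpose P ** diag_mat (\<lambda>i. g (l i)) ** P"

lemma spectral_fun_cong: "(\<And>i. g (l i) = h (l i)) \<Longrightarrow> spectral_fun P l g = spectral_fun P l h"
  unfolding spectral_fun_def by simp

lemma transpose_spectral_fun [simp]: "transpose (spectral_fun P l g) = spectral_fun P l g"
  unfolding spectral_fun_def
  by (simp only: matrix_transpose_mul transpose_transpose transpose_diag_mat matrix_mul_assoc)

lemma matrix_inv_eqI:
  fixes A B :: "real^'n^'n"
  assumes "A ** B = mat 1" "B ** A = mat 1"
  shows "matrix_inv A = B"
  unfolding matrix_inv_def
proof (rule some_equality)
  fix B' assume "A ** B' = mat 1 \<and> B' ** A = mat 1"
  thus "B' = B" using assms by (metis matrix_mul_assoc matrix_mul_lid matrix_mul_rid)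
qed (use assms in simp)

lemma diagonal_entry_conj_eq_inner: "(P ** C ** transpose P) $ i $ i = P $ i \<bullet> (C *v P $ i)"
proof -
  have "(P ** C ** transpose P) $ i $ i = (\<Sum>q\<in>UNIV. \<Sum>p\<in>UNIV. P $ i $ p * C $ p $ q * P $ i $ q)"
    by (simp add: matrix_matrix_mult_def transpose_def sum_distrib_right)
  also have "\<dots> = (\<Sum>p\<in>UNIV. \<Sum>q\<in>UNIV. P $ i $ p * C $ p $ q * P $ i $ q)"
    by (rule sum.swap)
  also have "\<dots> = P $ i \<bullet> (C *v P $ i)"
    by (simp add: inner_vec_def matrix_vector_mult_def sum_distrib_left mult.assoc)
  finally show ?thesis .
qed

lemma trace_mult_diag_mat: "trace (A ** diag_mat d) = (\<Sum>i\<in>UNIV. A $ i $ i * d i)"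
proof -
  have "(\<Sum>k\<in>UNIV. A $ i $ k * (if k = i then d k else 0)) = A $ i $ i * d i" for i
    by (subst sum.remove[of _ i]) auto
  thus ?thesis by (simp add: trace_def matrix_matrix_mult_def diag_mat_def)
qed

lemma trace_mult_spectral_fun:
  "trace (C ** spectral_fun P l g) = (\<Sum>i\<in>UNIV. g (l i) * (P $ i \<bullet> (C *v P $ i)))"
proof -
  have "trace (C ** spectral_fun P l g) = trace ((C ** transpose P ** diag_mat (\<lambda>i. g (l i))) ** P)"
    unfolding spectral_fun_def by (simp only: matrix_mul_assoc)
  also have "\<dots> = trace ((P ** C ** transpose P) ** diag_mat (\<lambda>i. g (l i)))"
    unfolding trace_mul_sym[of _ P] by (simp only: matrix_mul_assoc)
  also have "\<dots> = (\<Sum>i\<in>UNIV. (P ** C ** transpose P) $ i $ i * g (l i))"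
    by (rule trace_mult_diag_mat)
  finally show ?thesis unfolding diagonal_entry_conj_eq_inner by (simp only: mult.commute)
qed

lemma inner_transpose_mult_vec: "x \<bullet> (transpose A *v y) = (A *v x) \<bullet> (y :: real^'n)"
  by (metis dot_lmul_matrix inner_commute vector_transpose_matrix)

context
  fixes P :: "real^'n^'n"
  assumes P: "orthogonal_matrix P"
begin

lemma orthogonal_matrix_row_norm: "norm (P $ i) = 1"
proof -
  have "row i P = P $ i" by (simp add: row_def vec_eq_iff)
  thus ?thesis using P orthogonal_matrix_orthonormal_rows by metis
qed

lemma spectral_fun_mult: "spectral_fun P l g ** spectral_fun P l h = spectral_fun P l (\<lambda>x. g x * h x)"
proof -
  have "spectral_fun P l g ** spectral_fun P l h
      = transpose P ** diag_mat (\<lambda>i. g (l i)) ** (P ** transpose P) ** diag_mat (\<lambda>i. h (l i)) ** P"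
    unfolding spectral_fun_def by (simp only: matrix_mul_assoc)
  also have "\<dots> = transpose P ** (diag_mat (\<lambda>i. g (l i)) ** diag_mat (\<lambda>i. h (l i))) ** P"
    using P unfolding orthogonal_matrix_def by (simp only: matrix_mul_rid matrix_mul_assoc)
  finally show ?thesis unfolding spectral_fun_def diag_mat_mult .
qed

lemma spectral_fun_const_one: "spectral_fun P l (\<lambda>_. 1) = mat 1"
  using P by (simp add: spectral_fun_def orthogonal_matrix_def)

lemma spectral_fun_coord: "(P *v (spectral_fun P l g *v x)) $ i = g (l i) * (P *v x) $ i"
proof -
  have "P *v (spectral_fun P l g *v x) = (P ** transpose P) *v (diag_mat (\<lambda>i. g (l i)) *v (P *v x))"
    unfolding spectral_fun_def by (simp only: matrix_vector_mul_assoc matrix_mul_assoc)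
  thus ?thesis using P by (simp add: orthogonal_matrix_def)
qed

lemma norm_square_eq_sum_coords: "(norm x)\<^sup>2 = (\<Sum>i\<in>UNIV. ((P *v x) $ i)\<^sup>2)"
proof -
  have "(norm x)\<^sup>2 = x \<bullet> ((transpose P ** P) *v x)"
    using P by (simp add: orthogonal_matrix_def power2_norm_eq_inner)
  also have "\<dots> = (P *v x) \<bullet> (P *v x)"
    by (simp only: matrix_vector_mul_assoc[symmetric] inner_transpose_mult_vec)
  finally show ?thesis by (simp add: inner_vec_def power2_eq_square)
qed

lemma inner_spectral_fun: "x \<bullet> (spectral_fun P l g *v x) = (\<Sum>i\<in>UNIV. g (l i) * ((P *v x) $ i)\<^sup>2)"
proof -
  have "x \<bullet> (spectral_fun P l g *v x) = (P *v x) \<bullet> (diag_mat (\<lambda>i. g (l i)) *v (P *v x))"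
    unfolding spectral_fun_def by (simp only: matrix_vector_mul_assoc[symmetric] inner_transpose_mult_vec)
  thus ?thesis by (simp add: inner_vec_def power2_eq_square mult_ac)
qed

lemma spectral_fun_eigenvector: "spectral_fun P l g *v P $ i = g (l i) *\<^sub>R P $ i"
proof -
  have rows: "P $ j \<bullet> P $ i = (if j = i then 1 else 0)" for j
    using P unfolding orthogonal_matrix_def matrix_mult_transpose_dot_row
    by (simp add: vec_eq_iff mat_def row_def)
  have "P *v (spectral_fun P l g *v P $ i) = P *v (g (l i) *\<^sub>R P $ i)"
    unfolding vec_eq_iff spectral_fun_coord by (simp add: matrix_vector_mul_component rows)
  hence "(transpose P ** P) *v (spectral_fun P l g *v P $ i)
      = (transpose P ** P) *v (g (l i) *\<^sub>R P $ i)"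
    by (simp only: matrix_vector_mul_assoc[symmetric])
  thus ?thesis using P by (simp add: orthogonal_matrix_def)
qed

lemma trace_spectral_fun: "trace (spectral_fun P l g) = (\<Sum>i\<in>UNIV. g (l i))"
  using trace_mult_spectral_fun[of "mat 1" P l g] orthogonal_matrix_row_norm
  by (simp add: norm_eq_1)

lemma spectral_fun_eigenvalue_le_trace:
  assumes "\<And>j. 0 \<le> l j"
  shows "l i \<le> trace (spectral_fun P l (\<lambda>x. x))"
  unfolding trace_spectral_fun using assms by (intro member_le_sum) simp_all

lemma matrix_inv_spectral_fun:
  assumes "\<And>i. g (l i) \<noteq> 0"
  shows "matrix_inv (spectral_fun P l g) = spectral_fun P l (\<lambda>x. 1 / g x)"
proof (rule matrix_inv_eqI)
  have "spectral_fun P l (\<lambda>x. g x * (1 / g x)) = spectral_fun P l (\<lambda>_. 1)"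
    "spectral_fun P l (\<lambda>x. 1 / g x * g x) = spectral_fun P l (\<lambda>_. 1)"
    using assms by (auto intro: spectral_fun_cong)
  thus "spectral_fun P l g ** spectral_fun P l (\<lambda>x. 1 / g x) = mat 1"
    "spectral_fun P l (\<lambda>x. 1 / g x) ** spectral_fun P l g = mat 1"
    by (simp_all add: spectral_fun_mult spectral_fun_const_one)
qed

end

section \<open>Square roots and inverses of positive definite matrices\<close>

lemma sym_psd_quadratic_form_zero_imp_zero:
  fixes S :: "real^'n^'n"
  assumes "sym_psd S" and "x \<bullet> (S *v x) = 0"
  shows "S *v x = 0"
proof -
  have sym: "transpose S = S" and psd: "\<And>y. y \<bullet> (S *v y) \<ge> 0"
    using assms(1) by (auto simp: sym_psd_def)
  let ?y = "S *v x"
  have "- (?y \<bullet> ?y) = 0"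
  proof (rule linear_coeff_zero_if_quadratic_nonpos[where b = "- (?y \<bullet> (S *v ?y))"])
    fix t :: real
    have "(x + t *\<^sub>R ?y) \<bullet> (S *v (x + t *\<^sub>R ?y)) = 2 * t * (?y \<bullet> ?y) + t\<^sup>2 * (?y \<bullet> (S *v ?y))"
      using assms(2) symmetric_matrix_inner_commute[OF sym, of x ?y]
      by (simp add: matrix_vector_right_distrib matrix_vector_mult_scaleR inner_add_left inner_add_right
          power2_eq_square algebra_simps)
    thus "2 * t * - (?y \<bullet> ?y) + t\<^sup>2 * - (?y \<bullet> (S *v ?y)) \<le> 0"
      using psd[of "x + t *\<^sub>R ?y"] by simp
  qed
  thus ?thesis by simp
qed

lemma sym_psd_square_root_unique:
  fixes S T :: "real^'n^'n"
  assumes S: "sym_psd S" and T: "sym_psd T" and eq: "S ** S = T ** T"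
  shows "S = T"
proof -
  define D where "D = S - T"
  have "transpose S = S" "transpose T = T" using S T by (auto simp: sym_psd_def)
  moreover have "transpose D = transpose S - transpose T"
    unfolding D_def transpose_def by (simp add: vec_eq_iff)
  ultimately have symD: "transpose D = D" by (simp add: D_def)
  then obtain Q m where Q: "orthogonal_matrix Q" and "D = transpose Q ** diag_mat m ** Q"
    by (rule symmetric_matrix_diagonalizable)
  hence Dd: "D = spectral_fun Q m (\<lambda>x. x)" by (simp add: spectral_fun_def)
  \<comment> \<open>Every eigenvalue of D vanishes: from S D + D T = S S - T T = 0, an eigenvector v of D with
    eigenvalue m \<noteq> 0 would satisfy v \<bullet> S v + v \<bullet> T v = 0, hence S v = T v = 0 and D v = 0.\<close>
  have "m i = 0" for i
  proof (rule ccontr)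
    assume mi: "m i \<noteq> 0"
    let ?v = "Q $ i"
    have Dv: "D *v ?v = m i *\<^sub>R ?v" unfolding Dd by (rule spectral_fun_eigenvector[OF Q])
    have Dw: "D *v w = S *v w - T *v w" for w
      unfolding D_def by (simp add: matrix_vector_mult_diff_rdistrib)
    have "S *v (D *v ?v) + D *v (T *v ?v) = (S ** S) *v ?v - (T ** T) *v ?v"
      unfolding Dw by (simp add: matrix_vector_mult_diff_distrib matrix_vector_mul_assoc)
    hence "?v \<bullet> (S *v (D *v ?v)) + ?v \<bullet> (D *v (T *v ?v)) = 0" using eq by (simp flip: inner_add_right)
    moreover have "?v \<bullet> (D *v (T *v ?v)) = m i * (?v \<bullet> (T *v ?v))"
      using symmetric_matrix_inner_commute[OF symD, of ?v] Dv by simp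
    ultimately have "m i * (?v \<bullet> (S *v ?v) + ?v \<bullet> (T *v ?v)) = 0"
      using Dv by (simp add: matrix_vector_mult_scaleR algebra_simps)
    moreover have "?v \<bullet> (S *v ?v) \<ge> 0" "?v \<bullet> (T *v ?v) \<ge> 0" using S T by (auto simp: sym_psd_def)
    ultimately have "?v \<bullet> (S *v ?v) = 0" "?v \<bullet> (T *v ?v) = 0" using mi by simp_all
    hence "S *v ?v = 0" "T *v ?v = 0" using sym_psd_quadratic_form_zero_imp_zero S T by blast+
    hence "D *v ?v = 0" unfolding Dw by simp
    thus False using Dv mi orthogonal_matrix_row_norm[OF Q, of i] by auto
  qed
  hence "D = spectral_fun Q m (\<lambda>_. 0)" unfolding Dd by (intro spectral_fun_cong) simp
  hence "D = 0" by (simp add: spectral_fun_def diag_mat_def vec_eq_iff matrix_matrix_mult_def)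
  thus ?thesis unfolding D_def by simp
qed

lemma msqrt_eqI: "sym_psd S \<Longrightarrow> S ** S = A \<Longrightarrow> msqrt A = S"
  unfolding msqrt_def by (rule the_equality) (auto intro: sym_psd_square_root_unique)

lemma msqrt_spectral_fun:
  assumes P: "orthogonal_matrix P" and g: "\<And>i. 0 \<le> g (l i)"
  shows "msqrt (spectral_fun P l g) = spectral_fun P l (\<lambda>x. sqrt (g x))"
proof (rule msqrt_eqI)
  show "sym_psd (spectral_fun P l (\<lambda>x. sqrt (g x)))"
    unfolding sym_psd_def inner_spectral_fun[OF P] using g by (auto intro!: sum_nonneg)
  have "spectral_fun P l (\<lambda>x. sqrt (g x) * sqrt (g x)) = spectral_fun P l g"
    using g by (intro spectral_fun_cong) simp
  thus "spectral_fun P l (\<lambda>x. sqrt (g x)) ** spectral_fun P l (\<lambda>x. sqrt (g x)) = spectral_fun P l g"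
    by (simp add: spectral_fun_mult[OF P])
qed

lemma matrix_inv_msqrt_spectral_fun:
  assumes P: "orthogonal_matrix P" and l: "\<And>i. 0 < l i"
  shows "matrix_inv (msqrt (spectral_fun P l (\<lambda>x. x))) = spectral_fun P l (\<lambda>x. 1 / sqrt x)"
proof -
  have "msqrt (spectral_fun P l (\<lambda>x. x)) = spectral_fun P l sqrt"
    using msqrt_spectral_fun[OF P, where g = "\<lambda>x. x"] l by (simp add: less_imp_le)
  thus ?thesis using l by (simp add: matrix_inv_spectral_fun[OF P] less_imp_neq[symmetric])
qed

lemma trace_mult_matrix_inv_spectral_fun:
  assumes P: "orthogonal_matrix P" and l: "\<And>i. 0 < l i"
  shows "trace (C ** matrix_inv (spectral_fun P l (\<lambda>x. x))) = (\<Sum>i\<in>UNIV. (P $ i \<bullet> (C *v P $ i)) / l i)"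
proof -
  have "matrix_inv (spectral_fun P l (\<lambda>x. x)) = spectral_fun P l (\<lambda>x. 1 / x)"
    using l by (simp add: matrix_inv_spectral_fun[OF P] less_imp_neq[symmetric])
  thus ?thesis by (simp add: trace_mult_spectral_fun)
qed

lemma sym_pos_def_spectral_decomposition:
  fixes H :: "real^'n^'n"
  assumes H: "sym_pos_def H"
  obtains P l where "orthogonal_matrix P" "H = spectral_fun P l (\<lambda>x. x)" "\<And>i. 0 < l i"
proof -
  have "transpose H = H" using H by (simp add: sym_pos_def_def)
  then obtain P l where P: "orthogonal_matrix P" and "H = transpose P ** diag_mat l ** P"
    by (rule symmetric_matrix_diagonalizable)
  hence Hd: "H = spectral_fun P l (\<lambda>x. x)" by (simp add: spectral_fun_def)
  have "0 < l i" for i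
  proof -
    have "H *v P $ i = l i *\<^sub>R P $ i" unfolding Hd by (rule spectral_fun_eigenvector[OF P])
    moreover have "P $ i \<noteq> 0" using orthogonal_matrix_row_norm[OF P, of i] by auto
    ultimately show ?thesis
      using H orthogonal_matrix_row_norm[OF P, of i] by (auto simp: sym_pos_def_def norm_eq_1)
  qed
  with P Hd show ?thesis by (rule that)
qed

section \<open>The averaged iterate in eigencoordinates\<close>

lemma linear_recurrence_closed_form:
  fixes y z :: "nat \<Rightarrow> real"
  assumes "\<And>k. y (Suc k) = r * y k + z (Suc k)"
  shows "y k = r ^ k * y 0 + (\<Sum>j=1..k. r ^ (k - j) * z j)"
proof (induction k)
  case (Suc k)
  have "(\<Sum>j=1..Suc k. r ^ (Suc k - j) * z j) = r * (\<Sum>j=1..k. r ^ (k - j) * z j) + z (Suc k)"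
    by (simp add: sum_distrib_left, intro sum.cong) (auto simp: Suc_diff_le)
  thus ?case using assms Suc.IH by (simp add: algebra_simps)
qed simp

lemma sum_sum_convolution_eq:
  fixes z :: "nat \<Rightarrow> real"
  shows "(\<Sum>k<K. \<Sum>j=1..k. r ^ (k - j) * z j) = (\<Sum>j=1..<K. (\<Sum>m<K - j. r ^ m) * z j)"
proof -
  have "(\<Sum>k<K. \<Sum>j=1..k. r ^ (k - j) * z j) = (\<Sum>k<K. \<Sum>j | j \<in> {1..<K} \<and> j \<le> k. r ^ (k - j) * z j)"
    by (intro sum.cong refl) (auto intro: sum.cong)
  also have "\<dots> = (\<Sum>j=1..<K. \<Sum>k | k \<in> {..<K} \<and> j \<le> k. r ^ (k - j) * z j)"
    by (rule sum.swap_restrict) auto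
  also have "\<dots> = (\<Sum>j=1..<K. \<Sum>k=j..<K. r ^ (k - j) * z j)"
    by (intro sum.cong refl) (auto intro: sum.cong)
  also have "\<dots> = (\<Sum>j=1..<K. (\<Sum>m<K - j. r ^ m) * z j)"
    by (simp add: sum_distrib_right sum.atLeastLessThan_shift_0 atLeast0LessThan)
  finally show ?thesis .
qed

definition bias_weight :: "real \<Rightarrow> real \<Rightarrow> nat \<Rightarrow> real" where
  "bias_weight \<gamma> \<mu> K = (\<Sum>k<K. (1 - \<gamma> * \<mu>) ^ k) / K"

definition noise_weight :: "real \<Rightarrow> real \<Rightarrow> nat \<Rightarrow> nat \<Rightarrow> real" where
  "noise_weight \<gamma> \<mu> K j = \<gamma> * (\<Sum>m<K - j. (1 - \<gamma> * \<mu>) ^ m) / K"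

context
  fixes P :: "real^'n^'n" and l :: "'n \<Rightarrow> real" and H :: "real^'n^'n"
  assumes P: "orthogonal_matrix P" and H: "H = spectral_fun P l (\<lambda>x. x)"
begin

lemma eta0_seq_coord:
  "(P *v eta0_seq \<gamma> H xa e0 k \<omega>) $ i =
     (1 - \<gamma> * l i) ^ k * (P *v e0) $ i + (\<Sum>j=1..k. (1 - \<gamma> * l i) ^ (k - j) * (\<gamma> * (P *v xa j \<omega>) $ i))"
proof -
  have step: "(P *v eta0_seq \<gamma> H xa e0 (Suc k) \<omega>) $ i
      = (1 - \<gamma> * l i) * (P *v eta0_seq \<gamma> H xa e0 k \<omega>) $ i + \<gamma> * (P *v xa (Suc k) \<omega>) $ i" for k
  proof -
    let ?v = "eta0_seq \<gamma> H xa e0 k \<omega>"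
    have "(mat 1 - \<gamma> *\<^sub>R H) *v ?v = ?v - \<gamma> *\<^sub>R (H *v ?v)"
      by (simp only: matrix_vector_mult_diff_rdistrib matrix_vector_mul_lid scaleR_matrix_vector_assoc)
    hence "eta0_seq \<gamma> H xa e0 (Suc k) \<omega> = ?v - \<gamma> *\<^sub>R (H *v ?v) + \<gamma> *\<^sub>R xa (Suc k) \<omega>"
      by simp
    hence "(P *v eta0_seq \<gamma> H xa e0 (Suc k) \<omega>) $ i
        = (P *v ?v) $ i - \<gamma> * (P *v (H *v ?v)) $ i + \<gamma> * (P *v xa (Suc k) \<omega>) $ i"
      by (simp only: matrix_vector_right_distrib matrix_vector_mult_diff_distrib matrix_vector_mult_scaleR
          vector_add_component vector_minus_component vector_scaleR_component real_scaleR_def)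
    moreover have "(P *v (H *v ?v)) $ i = l i * (P *v ?v) $ i"
      unfolding H by (rule spectral_fun_coord[OF P])
    ultimately show ?thesis by (simp add: algebra_simps)
  qed
  show ?thesis
    using linear_recurrence_closed_form[where y = "\<lambda>k. (P *v eta0_seq \<gamma> H xa e0 k \<omega>) $ i"
        and z = "\<lambda>k. \<gamma> * (P *v xa k \<omega>) $ i", OF step] by simp
qed

lemma eta0_bar_coord:
  "(P *v eta0_bar \<gamma> H xa e0 K \<omega>) $ i =
     bias_weight \<gamma> (l i) K * (P *v e0) $ i + (\<Sum>j=1..<K. noise_weight \<gamma> (l i) K j * (P *v xa j \<omega>) $ i)"
proof -
  let ?r = "1 - \<gamma> * l i"
  let ?T = "\<Sum>j=1..<K. (\<Sum>m<K - j. ?r ^ m) * (P *v xa j \<omega>) $ i"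
  have "(P *v eta0_bar \<gamma> H xa e0 K \<omega>) $ i = (\<Sum>k<K. (P *v eta0_seq \<gamma> H xa e0 k \<omega>) $ i) / K"
    unfolding eta0_bar_def by (simp add: matrix_vector_mult_scaleR vec.sum sum_component)
  also have "(\<Sum>k<K. (P *v eta0_seq \<gamma> H xa e0 k \<omega>) $ i)
      = (\<Sum>k<K. ?r ^ k) * (P *v e0) $ i + \<gamma> * (\<Sum>k<K. \<Sum>j=1..k. ?r ^ (k - j) * (P *v xa j \<omega>) $ i)"
    unfolding eta0_seq_coord by (simp add: sum.distrib sum_distrib_left sum_distrib_right mult_ac)
  also have "\<dots> = (\<Sum>k<K. ?r ^ k) * (P *v e0) $ i + \<gamma> * ?T"
    by (simp only: sum_sum_convolution_eq)
  moreover have "(\<Sum>j=1..<K. noise_weight \<gamma> (l i) K j * (P *v xa j \<omega>) $ i) = \<gamma> / K * ?T"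
    unfolding noise_weight_def sum_distrib_left[of "\<gamma> / K"] by (rule sum.cong) (simp_all add: mult_ac)
  ultimately show ?thesis by (simp add: bias_weight_def add_divide_distrib)
qed

lemma msqrt_eta0_bar_coord:
  assumes "\<And>i. 0 \<le> l i"
  shows "(P *v (msqrt H *v eta0_bar \<gamma> H xa e0 K \<omega>)) $ i =
     sqrt (l i) * bias_weight \<gamma> (l i) K * (P *v e0) $ i
     + (\<Sum>j=1..<K. sqrt (l i) * noise_weight \<gamma> (l i) K j * (P *v xa j \<omega>) $ i)"
proof -
  have "msqrt H = spectral_fun P l sqrt"
    unfolding H using msqrt_spectral_fun[OF P, where g = "\<lambda>x. x"] assms by simp
  hence "(P *v (msqrt H *v eta0_bar \<gamma> H xa e0 K \<omega>)) $ i
      = sqrt (l i) * (P *v eta0_bar \<gamma> H xa e0 K \<omega>) $ i"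
    by (simp add: spectral_fun_coord[OF P])
  thus ?thesis unfolding eta0_bar_coord by (simp add: sum_distrib_left algebra_simps)
qed

end

lemma geometric_sum_bounds:
  fixes x :: real
  assumes "0 < x" "x \<le> 1"
  shows "0 \<le> (\<Sum>k<n. (1 - x) ^ k)" "(\<Sum>k<n. (1 - x) ^ k) \<le> 1 / x" "(\<Sum>k<n. (1 - x) ^ k) \<le> n"
proof -
  show "0 \<le> (\<Sum>k<n. (1 - x) ^ k)" using assms by (simp add: sum_nonneg)
  have "(\<Sum>k<n. (1 - x) ^ k) = (1 - (1 - x) ^ n) / x"
    using assms sum_gp_strict[of "1 - x" n] by simp
  thus "(\<Sum>k<n. (1 - x) ^ k) \<le> 1 / x" using assms by (simp add: divide_right_mono)
  have "(\<Sum>k<n. (1 - x) ^ k) \<le> (\<Sum>k<n. 1)"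
    by (rule sum_mono) (use assms in \<open>simp add: power_le_one\<close>)
  thus "(\<Sum>k<n. (1 - x) ^ k) \<le> n" by simp
qed

context
  fixes \<gamma> \<mu> :: real and K :: nat
  assumes \<mu>: "0 < \<mu>" and \<gamma>: "0 < \<gamma>" "\<gamma> * \<mu> \<le> 1" and K: "K \<ge> 1"
begin

lemma bias_weight_bounds:
  shows "(sqrt \<mu> * bias_weight \<gamma> \<mu> K * c)\<^sup>2 \<le> c\<^sup>2 / (\<gamma>\<^sup>2 * K\<^sup>2 * \<mu>)"
    and "(sqrt \<mu> * bias_weight \<gamma> \<mu> K * c)\<^sup>2 \<le> c\<^sup>2 / (\<gamma> * K)"
proof -
  define s where "s = (\<Sum>k<K. (1 - \<gamma> * \<mu>) ^ k)"
  have s: "0 \<le> s" "s \<le> 1 / (\<gamma> * \<mu>)" "s \<le> K"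
    unfolding s_def using geometric_sum_bounds[of "\<gamma> * \<mu>"] \<mu> \<gamma> by auto
  have e: "(sqrt \<mu> * bias_weight \<gamma> \<mu> K * c)\<^sup>2 = \<mu> * s\<^sup>2 * (c\<^sup>2 / K\<^sup>2)"
    using \<mu> by (simp add: bias_weight_def s_def power_mult_distrib power_divide)
  have "\<mu> * s\<^sup>2 \<le> \<mu> * (1 / (\<gamma> * \<mu>))\<^sup>2" using s \<mu> by (simp add: power_mono)
  also have "\<dots> = 1 / (\<gamma>\<^sup>2 * \<mu>)" using \<mu> \<gamma> by (simp add: power2_eq_square)
  finally have "\<mu> * s\<^sup>2 * (c\<^sup>2 / K\<^sup>2) \<le> 1 / (\<gamma>\<^sup>2 * \<mu>) * (c\<^sup>2 / K\<^sup>2)" by (rule mult_right_mono) simp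
  thus "(sqrt \<mu> * bias_weight \<gamma> \<mu> K * c)\<^sup>2 \<le> c\<^sup>2 / (\<gamma>\<^sup>2 * K\<^sup>2 * \<mu>)" unfolding e by (simp add: ac_simps)
  have "\<mu> * s\<^sup>2 \<le> \<mu> * (K * (1 / (\<gamma> * \<mu>)))"
    unfolding power2_eq_square using s \<mu> by (intro mult_left_mono mult_mono) auto
  also have "\<dots> = K / \<gamma>" using \<mu> by simp
  finally have "\<mu> * s\<^sup>2 * (c\<^sup>2 / K\<^sup>2) \<le> K / \<gamma> * (c\<^sup>2 / K\<^sup>2)" by (rule mult_right_mono) simp
  thus "(sqrt \<mu> * bias_weight \<gamma> \<mu> K * c)\<^sup>2 \<le> c\<^sup>2 / (\<gamma> * K)"
    unfolding e using K by (simp add: power2_eq_square)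
qed

lemma noise_weight_bound: "(\<Sum>j=1..<K. (sqrt \<mu> * noise_weight \<gamma> \<mu> K j)\<^sup>2) \<le> 1 / (K * \<mu>)"
proof -
  have each: "(sqrt \<mu> * noise_weight \<gamma> \<mu> K j)\<^sup>2 \<le> 1 / (\<mu> * (real K)\<^sup>2)" for j
  proof -
    define s where "s = (\<Sum>m<K - j. (1 - \<gamma> * \<mu>) ^ m)"
    have s: "0 \<le> s" "s \<le> 1 / (\<gamma> * \<mu>)"
      unfolding s_def using geometric_sum_bounds[of "\<gamma> * \<mu>"] \<mu> \<gamma> by auto
    have "(sqrt \<mu> * noise_weight \<gamma> \<mu> K j)\<^sup>2 = \<mu> * \<gamma>\<^sup>2 * s\<^sup>2 / (real K)\<^sup>2"
      using \<mu> by (simp add: noise_weight_def s_def power_mult_distrib power_divide)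
    also have "\<dots> \<le> \<mu> * \<gamma>\<^sup>2 * (1 / (\<gamma> * \<mu>))\<^sup>2 / (real K)\<^sup>2"
      using s \<mu> by (intro divide_right_mono mult_left_mono power_mono) auto
    also have "\<dots> = 1 / (\<mu> * (real K)\<^sup>2)" using \<mu> \<gamma> by (simp add: power2_eq_square)
    finally show ?thesis .
  qed
  have "(\<Sum>j=1..<K. (sqrt \<mu> * noise_weight \<gamma> \<mu> K j)\<^sup>2) \<le> (\<Sum>j=1..<K. 1 / (\<mu> * (real K)\<^sup>2))"
    by (rule sum_mono) (rule each)
  also have "\<dots> \<le> K * (1 / (\<mu> * (real K)\<^sup>2))" using \<mu> by (simp add: divide_right_mono)
  also have "\<dots> = 1 / (K * \<mu>)" by (simp add: power2_eq_square)
  finally show ?thesis .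
qed

end

lemma sqrt_bias_noise_bound:
  fixes B N T u v \<gamma> :: real and K :: nat
  assumes K: "K \<ge> 1" and \<gamma>: "\<gamma> > 0" and "0 \<le> B" "0 \<le> N" "0 \<le> u" "0 \<le> v"
    and bu: "B \<le> u\<^sup>2 / (\<gamma>\<^sup>2 * K\<^sup>2)" and bv: "B \<le> v\<^sup>2 / (\<gamma> * K)" and nt: "N \<le> T / K"
  shows "sqrt (B + N) \<le> 1 / sqrt K * (min (u / (\<gamma> * sqrt K)) (v / sqrt \<gamma>) + sqrt T)"
proof -
  let ?m = "min (u / (\<gamma> * sqrt K)) (v / sqrt \<gamma>)"
  have "(u / (\<gamma> * sqrt K))\<^sup>2 / K = u\<^sup>2 / (\<gamma>\<^sup>2 * K\<^sup>2)" "(v / sqrt \<gamma>)\<^sup>2 / K = v\<^sup>2 / (\<gamma> * K)"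
    using K \<gamma> by (simp_all add: power_divide power_mult_distrib power2_eq_square)
  hence "B \<le> ?m\<^sup>2 / K" using bu bv by (simp add: min_def)
  hence "sqrt B \<le> sqrt (?m\<^sup>2 / K)" by (rule real_sqrt_le_mono)
  also have "\<dots> = ?m / sqrt K" using assms by (simp add: real_sqrt_divide)
  finally have "sqrt B \<le> ?m / sqrt K" .
  moreover have "sqrt N \<le> sqrt T / sqrt K" using nt by (metis real_sqrt_divide real_sqrt_le_mono)
  moreover have "sqrt (B + N) \<le> sqrt B + sqrt N" using assms by (simp add: sqrt_add_le_add_sqrt)
  ultimately show ?thesis by (simp add: add_divide_distrib)
qed

lemma averaged_iterate_bound_eigen:
  fixes P :: "real^'n^'n"
  assumes P: "orthogonal_matrix P" and l: "\<And>i. 0 < l i" "\<And>i. \<gamma> * l i \<le> 1"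
    and \<gamma>: "\<gamma> > 0" and K: "K \<ge> 1" and \<sigma>: "\<And>i. 0 \<le> \<sigma> i"
  shows "sqrt (\<Sum>i\<in>UNIV. (sqrt (l i) * bias_weight \<gamma> (l i) K * (P *v e0) $ i)\<^sup>2
                 + (\<Sum>j=1..<K. (sqrt (l i) * noise_weight \<gamma> (l i) K j)\<^sup>2) * \<sigma> i)
    \<le> 1 / sqrt K * (min (norm (spectral_fun P l (\<lambda>x. 1 / sqrt x) *v e0) / (\<gamma> * sqrt K)) (norm e0 / sqrt \<gamma>)
        + sqrt (\<Sum>i\<in>UNIV. \<sigma> i / l i))"
proof -
  let ?c = "\<lambda>i. (P *v e0) $ i"
  let ?B = "\<Sum>i\<in>UNIV. (sqrt (l i) * bias_weight \<gamma> (l i) K * ?c i)\<^sup>2"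
  let ?N = "\<Sum>i\<in>UNIV. (\<Sum>j=1..<K. (sqrt (l i) * noise_weight \<gamma> (l i) K j)\<^sup>2) * \<sigma> i"
  have u: "(norm (spectral_fun P l (\<lambda>x. 1 / sqrt x) *v e0))\<^sup>2 = (\<Sum>i\<in>UNIV. (?c i)\<^sup>2 / l i)"
    unfolding norm_square_eq_sum_coords[OF P] spectral_fun_coord[OF P]
    using l by (simp add: power_mult_distrib power_divide less_imp_le)
  have "?B \<le> (\<Sum>i\<in>UNIV. (?c i)\<^sup>2 / (\<gamma>\<^sup>2 * K\<^sup>2 * l i))"
    using bias_weight_bounds(1) l \<gamma> K by (intro sum_mono) blast
  also have "\<dots> = (norm (spectral_fun P l (\<lambda>x. 1 / sqrt x) *v e0))\<^sup>2 / (\<gamma>\<^sup>2 * K\<^sup>2)"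
    unfolding u sum_divide_distrib by (simp add: ac_simps)
  finally have bu: "?B \<le> \<dots>" .
  have "?B \<le> (\<Sum>i\<in>UNIV. (?c i)\<^sup>2 / (\<gamma> * K))"
    using bias_weight_bounds(2) l \<gamma> K by (intro sum_mono) blast
  also have "\<dots> = (norm e0)\<^sup>2 / (\<gamma> * K)"
    unfolding norm_square_eq_sum_coords[OF P] sum_divide_distrib ..
  finally have bv: "?B \<le> \<dots>" .
  have "?N \<le> (\<Sum>i\<in>UNIV. 1 / (K * l i) * \<sigma> i)"
    using noise_weight_bound l \<gamma> K \<sigma> by (intro sum_mono mult_right_mono) blast+
  also have "\<dots> = (\<Sum>i\<in>UNIV. \<sigma> i / l i) / K"
    by (simp add: sum_divide_distrib mult.commute)
  finally have nt: "?N \<le> \<dots>" .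
  have "sqrt (?B + ?N) \<le> 1 / sqrt K * (min (norm (spectral_fun P l (\<lambda>x. 1 / sqrt x) *v e0) / (\<gamma> * sqrt K))
      (norm e0 / sqrt \<gamma>) + sqrt (\<Sum>i\<in>UNIV. \<sigma> i / l i))"
    using \<sigma> by (intro sqrt_bias_noise_bound[OF K \<gamma> _ _ _ _ bu bv nt])
      (auto intro!: sum_nonneg mult_nonneg_nonneg)
  thus ?thesis by (simp add: sum.distrib)
qed

section \<open>Second moments of independent centred noise\<close>

definition second_moment :: "'a measure \<Rightarrow> ('a \<Rightarrow> real^'n) \<Rightarrow> real^'n^'n" where
  "second_moment M X = (\<chi> p q. \<integral>\<omega>. X \<omega> $ p * X \<omega> $ q \<partial>M)"

lemma borel_measurable_vec_nth [measurable (raw)]: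
  fixes f :: "'a \<Rightarrow> real^'n"
  assumes "f \<in> borel_measurable M"
  shows "(\<lambda>x. f x $ i) \<in> borel_measurable M"
  using borel_measurable_inner[OF assms borel_measurable_const[of "axis i 1"]]
  by (simp add: cart_eq_inner_axis)

lemma integrable_component_mult:
  fixes X :: "'a \<Rightarrow> real^'n"
  assumes X: "X \<in> borel_measurable M" and sq: "integrable M (\<lambda>\<omega>. (norm (X \<omega>))\<^sup>2)"
  shows "integrable M (\<lambda>\<omega>. X \<omega> $ p * X \<omega> $ q)"
proof (rule Bochner_Integration.integrable_bound[OF sq])
  show "(\<lambda>\<omega>. X \<omega> $ p * X \<omega> $ q) \<in> borel_measurable M" using X by measurable
  have "\<bar>X \<omega> $ p\<bar> * \<bar>X \<omega> $ q\<bar> \<le> norm (X \<omega>) * norm (X \<omega>)" for \<omega>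
    by (intro mult_mono component_le_norm_cart) auto
  thus "AE \<omega> in M. norm (X \<omega> $ p * X \<omega> $ q) \<le> norm ((norm (X \<omega>))\<^sup>2)"
    by (simp add: abs_mult power2_eq_square)
qed

lemma integral_inner_square:
  fixes X :: "'a \<Rightarrow> real^'n"
  assumes X: "X \<in> borel_measurable M" and sq: "integrable M (\<lambda>\<omega>. (norm (X \<omega>))\<^sup>2)"
  shows "integrable M (\<lambda>\<omega>. (v \<bullet> X \<omega>)\<^sup>2)"
    and "(\<integral>\<omega>. (v \<bullet> X \<omega>)\<^sup>2 \<partial>M) = v \<bullet> (second_moment M X *v v)"
proof -
  have expand: "(v \<bullet> X \<omega>)\<^sup>2 = (\<Sum>p\<in>UNIV. \<Sum>q\<in>UNIV. v $ p * v $ q * (X \<omega> $ p * X \<omega> $ q))" for \<omega>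
    by (simp add: inner_vec_def power2_eq_square sum_product mult_ac)
  have int: "integrable M (\<lambda>\<omega>. v $ p * v $ q * (X \<omega> $ p * X \<omega> $ q))" for p q
    using integrable_component_mult[OF X sq] by simp
  show "integrable M (\<lambda>\<omega>. (v \<bullet> X \<omega>)\<^sup>2)" unfolding expand using int by simp
  have "(\<integral>\<omega>. (v \<bullet> X \<omega>)\<^sup>2 \<partial>M) = (\<Sum>p\<in>UNIV. \<Sum>q\<in>UNIV. v $ p * v $ q * (\<integral>\<omega>. X \<omega> $ p * X \<omega> $ q \<partial>M))"
    unfolding expand using int by (simp add: Bochner_Integration.integral_sum integrable_sum)
  also have "\<dots> = v \<bullet> (second_moment M X *v v)"
    by (simp add: second_moment_def inner_vec_def matrix_vector_mult_def sum_distrib_left mult_ac)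
  finally show "(\<integral>\<omega>. (v \<bullet> X \<omega>)\<^sup>2 \<partial>M) = v \<bullet> (second_moment M X *v v)" .
qed

lemma second_moment_nonneg:
  fixes X :: "'a \<Rightarrow> real^'n"
  assumes "X \<in> borel_measurable M" "integrable M (\<lambda>\<omega>. (norm (X \<omega>))\<^sup>2)"
  shows "0 \<le> v \<bullet> (second_moment M X *v v)"
  using integral_inner_square(2)[OF assms, of v]
  by (metis Bochner_Integration.integral_nonneg zero_le_power2)

lemma integral_eq_if_distr_eq:
  fixes g :: "'b \<Rightarrow> real"
  assumes X: "X \<in> measurable M N" and Y: "Y \<in> measurable M N" and eq: "distr M N X = distr M N Y"
    and g: "g \<in> borel_measurable N"
  shows "integrable M (\<lambda>\<omega>. g (X \<omega>)) \<longleftrightarrow> integrable M (\<lambda>\<omega>. g (Y \<omega>))"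
    and "(\<integral>\<omega>. g (X \<omega>) \<partial>M) = (\<integral>\<omega>. g (Y \<omega>) \<partial>M)"
  using integrable_distr_eq[OF X g] integrable_distr_eq[OF Y g]
    integral_distr[OF X g] integral_distr[OF Y g]
  unfolding eq by simp_all

lemma second_moment_eq_if_distr_eq:
  fixes f :: "'b \<Rightarrow> real^'n"
  assumes X: "X \<in> measurable M N" and Y: "Y \<in> measurable M N" and eq: "distr M N X = distr M N Y"
    and f: "f \<in> borel_measurable N" and sq: "integrable M (\<lambda>\<omega>. (norm (f (Y \<omega>)))\<^sup>2)"
  shows "integrable M (\<lambda>\<omega>. (norm (f (X \<omega>)))\<^sup>2)"
    and "second_moment M (\<lambda>\<omega>. f (X \<omega>)) = second_moment M (\<lambda>\<omega>. f (Y \<omega>))"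
proof -
  have "(\<lambda>x. (norm (f x))\<^sup>2) \<in> borel_measurable N"
    and "(\<lambda>x. f x $ p * f x $ q) \<in> borel_measurable N" for p q
    using f by measurable
  note distr_eq = integral_eq_if_distr_eq[OF X Y eq this(1)] integral_eq_if_distr_eq[OF X Y eq this(2)]
  show "integrable M (\<lambda>\<omega>. (norm (f (X \<omega>)))\<^sup>2)" using distr_eq(1) sq by simp
  show "second_moment M (\<lambda>\<omega>. f (X \<omega>)) = second_moment M (\<lambda>\<omega>. f (Y \<omega>))"
    unfolding second_moment_def using distr_eq(4) by simp
qed

lemma (in prob_space) indep_vars_centered_mult:
  fixes Y :: "'i \<Rightarrow> 'a \<Rightarrow> real"
  assumes ind: "indep_vars (\<lambda>_. borel) Y J" and j: "j \<in> J" and k: "k \<in> J"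
    and sq: "integrable M (\<lambda>\<omega>. (Y j \<omega>)\<^sup>2)" "integrable M (\<lambda>\<omega>. (Y k \<omega>)\<^sup>2)"
    and cen: "expectation (Y j) = 0"
  shows "integrable M (\<lambda>\<omega>. Y j \<omega> * Y k \<omega>)"
    and "expectation (\<lambda>\<omega>. Y j \<omega> * Y k \<omega>) = (if j = k then expectation (\<lambda>\<omega>. (Y j \<omega>)\<^sup>2) else 0)"
proof -
  have int: "integrable M (Y i)" if "i \<in> {j, k}" for i
  proof (rule square_integrable_imp_integrable)
    have "i \<in> J" using j k that by auto
    thus "Y i \<in> borel_measurable M" using ind by (simp add: indep_vars_def)
  qed (use sq that in auto)
  have ind2: "indep_vars (\<lambda>_. borel) Y {j, k}" by (rule indep_vars_subset[OF ind]) (use j k in auto)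
  have "integrable M (\<lambda>\<omega>. \<Prod>i\<in>{j, k}. Y i \<omega>)"
    by (rule indep_vars_integrable[OF _ ind2 int]) simp
  moreover have "expectation (\<lambda>\<omega>. \<Prod>i\<in>{j, k}. Y i \<omega>) = (\<Prod>i\<in>{j, k}. expectation (Y i))"
    by (rule indep_vars_lebesgue_integral[OF _ ind2 int]) simp
  ultimately show "integrable M (\<lambda>\<omega>. Y j \<omega> * Y k \<omega>)"
    and "expectation (\<lambda>\<omega>. Y j \<omega> * Y k \<omega>) = (if j = k then expectation (\<lambda>\<omega>. (Y j \<omega>)\<^sup>2) else 0)"
    using sq cen by (cases "j = k"; simp add: power2_eq_square)+
qed

lemma (in prob_space) expectation_square_sum_indep:
  fixes Y :: "'i \<Rightarrow> 'a \<Rightarrow> real"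
  assumes fin: "finite J" and ind: "indep_vars (\<lambda>_. borel) Y J"
    and sq: "\<And>j. j \<in> J \<Longrightarrow> integrable M (\<lambda>\<omega>. (Y j \<omega>)\<^sup>2)"
    and cen: "\<And>j. j \<in> J \<Longrightarrow> expectation (Y j) = 0"
  shows "integrable M (\<lambda>\<omega>. (\<Sum>j\<in>J. a j * Y j \<omega>)\<^sup>2)"
    and "expectation (\<lambda>\<omega>. (\<Sum>j\<in>J. a j * Y j \<omega>)\<^sup>2) = (\<Sum>j\<in>J. (a j)\<^sup>2 * expectation (\<lambda>\<omega>. (Y j \<omega>)\<^sup>2))"
proof -
  have mult_int: "integrable M (\<lambda>\<omega>. Y j \<omega> * Y k \<omega>)" if "j \<in> J" "k \<in> J" for j k
    using indep_vars_centered_mult(1)[OF ind that sq[OF that(1)] sq[OF that(2)] cen[OF that(1)]] .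
  have mult_exp: "a j * a k * expectation (\<lambda>\<omega>. Y j \<omega> * Y k \<omega>)
      = (if k = j then (a j)\<^sup>2 * expectation (\<lambda>\<omega>. (Y j \<omega>)\<^sup>2) else 0)" if "j \<in> J" "k \<in> J" for j k
    using indep_vars_centered_mult(2)[OF ind that sq[OF that(1)] sq[OF that(2)] cen[OF that(1)]]
    by (simp add: power2_eq_square)
  have expand: "(\<Sum>j\<in>J. a j * Y j \<omega>)\<^sup>2 = (\<Sum>j\<in>J. \<Sum>k\<in>J. a j * a k * (Y j \<omega> * Y k \<omega>))" for \<omega>
    by (simp add: power2_eq_square sum_product mult_ac)
  have int: "integrable M (\<lambda>\<omega>. \<Sum>k\<in>J. a j * a k * (Y j \<omega> * Y k \<omega>))" if "j \<in> J" for j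
    using mult_int[OF that] by (intro Bochner_Integration.integrable_sum integrable_mult_right)
  thus "integrable M (\<lambda>\<omega>. (\<Sum>j\<in>J. a j * Y j \<omega>)\<^sup>2)"
    unfolding expand by (rule Bochner_Integration.integrable_sum)
  have inner: "expectation (\<lambda>\<omega>. \<Sum>k\<in>J. a j * a k * (Y j \<omega> * Y k \<omega>))
      = (\<Sum>k\<in>J. a j * a k * expectation (\<lambda>\<omega>. Y j \<omega> * Y k \<omega>))" if "j \<in> J" for j
    by (subst Bochner_Integration.integral_sum) (simp_all add: mult_int[OF that])
  have "expectation (\<lambda>\<omega>. (\<Sum>j\<in>J. a j * Y j \<omega>)\<^sup>2)
      = (\<Sum>j\<in>J. \<Sum>k\<in>J. a j * a k * expectation (\<lambda>\<omega>. Y j \<omega> * Y k \<omega>))"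
    unfolding expand by (subst Bochner_Integration.integral_sum) (simp_all add: int inner)
  also have "\<dots> = (\<Sum>j\<in>J. \<Sum>k\<in>J. if k = j then (a j)\<^sup>2 * expectation (\<lambda>\<omega>. (Y j \<omega>)\<^sup>2) else 0)"
    by (intro sum.cong refl) (rule mult_exp)
  also have "\<dots> = (\<Sum>j\<in>J. (a j)\<^sup>2 * expectation (\<lambda>\<omega>. (Y j \<omega>)\<^sup>2))"
    using fin by simp
  finally show "expectation (\<lambda>\<omega>. (\<Sum>j\<in>J. a j * Y j \<omega>)\<^sup>2)
      = (\<Sum>j\<in>J. (a j)\<^sup>2 * expectation (\<lambda>\<omega>. (Y j \<omega>)\<^sup>2))" .
qed

lemma (in prob_space) expectation_square_affine_indep:
  fixes Y :: "'i \<Rightarrow> 'a \<Rightarrow> real"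
  assumes fin: "finite J" and ind: "indep_vars (\<lambda>_. borel) Y J"
    and sq: "\<And>j. j \<in> J \<Longrightarrow> integrable M (\<lambda>\<omega>. (Y j \<omega>)\<^sup>2)"
    and cen: "\<And>j. j \<in> J \<Longrightarrow> expectation (Y j) = 0"
  shows "integrable M (\<lambda>\<omega>. (d + (\<Sum>j\<in>J. a j * Y j \<omega>))\<^sup>2)"
    and "expectation (\<lambda>\<omega>. (d + (\<Sum>j\<in>J. a j * Y j \<omega>))\<^sup>2)
      = d\<^sup>2 + (\<Sum>j\<in>J. (a j)\<^sup>2 * expectation (\<lambda>\<omega>. (Y j \<omega>)\<^sup>2))"
proof -
  let ?S = "\<lambda>\<omega>. \<Sum>j\<in>J. a j * Y j \<omega>"
  note S = expectation_square_sum_indep[OF fin ind sq cen, of a]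
  have intY: "integrable M (Y j)" if "j \<in> J" for j
  proof (rule square_integrable_imp_integrable)
    show "Y j \<in> borel_measurable M" using ind that by (simp add: indep_vars_def)
  qed (rule sq[OF that])
  have int_S: "integrable M ?S"
    by (rule Bochner_Integration.integrable_sum, rule integrable_mult_right, erule intY)
  have exp_S: "expectation ?S = 0"
    by (subst Bochner_Integration.integral_sum) (simp_all add: intY cen)
  have expand: "(d + ?S \<omega>)\<^sup>2 = d\<^sup>2 + 2 * d * ?S \<omega> + (?S \<omega>)\<^sup>2" for \<omega>
    by (simp add: power2_eq_square algebra_simps)
  have int: "integrable M (\<lambda>\<omega>. 2 * d * ?S \<omega>)" "integrable M (\<lambda>\<omega>. (?S \<omega>)\<^sup>2)"
    using int_S S(1) by simp_all
  show "integrable M (\<lambda>\<omega>. (d + ?S \<omega>)\<^sup>2)"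
    unfolding expand using int by simp
  have "expectation (\<lambda>\<omega>. (d + ?S \<omega>)\<^sup>2) = d\<^sup>2 + 2 * d * expectation ?S + expectation (\<lambda>\<omega>. (?S \<omega>)\<^sup>2)"
    unfolding expand using int by (simp add: prob_space)
  thus "expectation (\<lambda>\<omega>. (d + ?S \<omega>)\<^sup>2) = d\<^sup>2 + (\<Sum>j\<in>J. (a j)\<^sup>2 * expectation (\<lambda>\<omega>. (Y j \<omega>)\<^sup>2))"
    using exp_S S(2) by simp
qed

lemma (in prob_space) expectation_norm_square_eigencoords:
  fixes X :: "'i \<Rightarrow> 'a \<Rightarrow> real^'n" and Z :: "'a \<Rightarrow> real^'n" and P :: "real^'n^'n"
  assumes P: "orthogonal_matrix P" and fin: "finite J"
    and Z: "\<And>\<omega> i. (P *v Z \<omega>) $ i = d i + (\<Sum>j\<in>J. a i j * (P *v X j \<omega>) $ i)"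
    and ind: "indep_vars (\<lambda>_. borel) X J"
    and int: "\<And>j. j \<in> J \<Longrightarrow> integrable M (X j)"
    and cen: "\<And>j. j \<in> J \<Longrightarrow> expectation (X j) = 0"
    and sq: "\<And>j. j \<in> J \<Longrightarrow> integrable M (\<lambda>\<omega>. (norm (X j \<omega>))\<^sup>2)"
    and C: "\<And>j. j \<in> J \<Longrightarrow> second_moment M (X j) = C"
  shows "expectation (\<lambda>\<omega>. (norm (Z \<omega>))\<^sup>2) =
    (\<Sum>i\<in>UNIV. (d i)\<^sup>2 + (\<Sum>j\<in>J. (a i j)\<^sup>2) * (P $ i \<bullet> (C *v P $ i)))"
proof -
  define Y where "Y i j \<omega> = P $ i \<bullet> X j \<omega>" for i j \<omega>
  have meas: "X j \<in> borel_measurable M" if "j \<in> J" for j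
    using ind that by (simp add: indep_vars_def)
  have indY: "indep_vars (\<lambda>_. borel) (Y i) J" for i
    unfolding Y_def by (rule indep_vars_compose2[OF ind]) simp
  have sqY: "integrable M (\<lambda>\<omega>. (Y i j \<omega>)\<^sup>2)" 
    and E2: "expectation (\<lambda>\<omega>. (Y i j \<omega>)\<^sup>2) = P $ i \<bullet> (C *v P $ i)" if "j \<in> J" for i j
    unfolding Y_def using integral_inner_square[OF meas sq] C that by simp_all
  have cenY: "expectation (Y i j) = 0" if "j \<in> J" for i j
    unfolding Y_def using int cen that by simp
  have coord: "integrable M (\<lambda>\<omega>. (d i + (\<Sum>j\<in>J. a i j * Y i j \<omega>))\<^sup>2) \<and>
      expectation (\<lambda>\<omega>. (d i + (\<Sum>j\<in>J. a i j * Y i j \<omega>))\<^sup>2)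
      = (d i)\<^sup>2 + (\<Sum>j\<in>J. (a i j)\<^sup>2) * (P $ i \<bullet> (C *v P $ i))" for i
    using expectation_square_affine_indep[OF fin indY sqY cenY, of "d i" "a i"] E2
    by (simp add: sum_distrib_right)
  have "(norm (Z \<omega>))\<^sup>2 = (\<Sum>i\<in>UNIV. (d i + (\<Sum>j\<in>J. a i j * Y i j \<omega>))\<^sup>2)" for \<omega>
    unfolding norm_square_eq_sum_coords[OF P] Z Y_def by (simp add: matrix_vector_mul_component)
  thus ?thesis using coord by (simp add: Bochner_Integration.integral_sum)
qed

lemma (in prob_space) iid_centered_fields_at_point:
  fixes \<xi> :: "nat \<Rightarrow> 'a \<Rightarrow> 'b \<Rightarrow> real^'n"
  assumes meas: "\<forall>k\<ge>1. \<xi> k \<in> measurable M (Pi\<^sub>M UNIV (\<lambda>_. borel))"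
    and indep: "indep_vars (\<lambda>_. Pi\<^sub>M UNIV (\<lambda>_. borel)) \<xi> {1..}"
    and ident: "\<forall>k\<ge>1. distr M (Pi\<^sub>M UNIV (\<lambda>_. borel)) (\<xi> k) = distr M (Pi\<^sub>M UNIV (\<lambda>_. borel)) (\<xi> 1)"
    and cen: "\<forall>k\<ge>1. \<forall>z. integrable M (\<lambda>\<omega>. \<xi> k \<omega> z) \<and> (\<integral>\<omega>. \<xi> k \<omega> z \<partial>M) = 0"
    and sq: "integrable M (\<lambda>\<omega>. (norm (\<xi> 1 \<omega> z))\<^sup>2)"
  shows "indep_vars (\<lambda>_. borel) (\<lambda>k \<omega>. \<xi> k \<omega> z) {1..}"
    and "k \<ge> 1 \<Longrightarrow> (\<lambda>\<omega>. \<xi> k \<omega> z) \<in> borel_measurable M"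
    and "k \<ge> 1 \<Longrightarrow> integrable M (\<lambda>\<omega>. \<xi> k \<omega> z)"
    and "k \<ge> 1 \<Longrightarrow> expectation (\<lambda>\<omega>. \<xi> k \<omega> z) = 0"
    and "k \<ge> 1 \<Longrightarrow> integrable M (\<lambda>\<omega>. (norm (\<xi> k \<omega> z))\<^sup>2)"
    and "k \<ge> 1 \<Longrightarrow> second_moment M (\<lambda>\<omega>. \<xi> k \<omega> z) = second_moment M (\<lambda>\<omega>. \<xi> 1 \<omega> z)"
proof -
  have eval: "(\<lambda>f. f z) \<in> borel_measurable (Pi\<^sub>M UNIV (\<lambda>_. borel :: (real^'n) measure))"
    by measurable
  show "indep_vars (\<lambda>_. borel) (\<lambda>k \<omega>. \<xi> k \<omega> z) {1..}"
    using indep_vars_compose2[OF indep eval] .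
  show "(\<lambda>\<omega>. \<xi> k \<omega> z) \<in> borel_measurable M" if "k \<ge> 1"
    using measurable_compose[OF meas[rule_format, OF that] eval] .
  show "integrable M (\<lambda>\<omega>. \<xi> k \<omega> z)" "expectation (\<lambda>\<omega>. \<xi> k \<omega> z) = 0" if "k \<ge> 1"
    using cen that by blast+
  show "integrable M (\<lambda>\<omega>. (norm (\<xi> k \<omega> z))\<^sup>2)"
    and "second_moment M (\<lambda>\<omega>. \<xi> k \<omega> z) = second_moment M (\<lambda>\<omega>. \<xi> 1 \<omega> z)" if k: "k \<ge> 1"
    using second_moment_eq_if_distr_eq[OF meas[rule_format, OF k] meas[rule_format, OF order_refl]
        ident[rule_format, OF k], OF eval sq] by auto
qed

lemma (in prob_space) expectation_norm_square_msqrt_eta0_bar: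
  fixes \<xi> :: "nat \<Rightarrow> 'a \<Rightarrow> real^'n \<Rightarrow> real^'n"
  assumes P: "orthogonal_matrix P" and H: "H = spectral_fun P l (\<lambda>x. x)" and l: "\<And>i. 0 \<le> l i"
    and meas: "\<forall>k\<ge>1. \<xi> k \<in> measurable M (Pi\<^sub>M UNIV (\<lambda>_. borel))"
    and indep: "indep_vars (\<lambda>_. Pi\<^sub>M UNIV (\<lambda>_. borel)) \<xi> {1..}"
    and ident: "\<forall>k\<ge>1. distr M (Pi\<^sub>M UNIV (\<lambda>_. borel)) (\<xi> k) = distr M (Pi\<^sub>M UNIV (\<lambda>_. borel)) (\<xi> 1)"
    and cen: "\<forall>k\<ge>1. \<forall>z. integrable M (\<lambda>\<omega>. \<xi> k \<omega> z) \<and> (\<integral>\<omega>. \<xi> k \<omega> z \<partial>M) = 0"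
    and sq: "integrable M (\<lambda>\<omega>. (norm (\<xi> 1 \<omega> 0))\<^sup>2)"
  shows "(\<integral>\<omega>. (norm (msqrt H *v eta0_bar \<gamma> H (\<lambda>k \<omega>. \<xi> k \<omega> 0) e0 K \<omega>))\<^sup>2 \<partial>M)
    = (\<Sum>i\<in>UNIV. (sqrt (l i) * bias_weight \<gamma> (l i) K * (P *v e0) $ i)\<^sup>2
        + (\<Sum>j=1..<K. (sqrt (l i) * noise_weight \<gamma> (l i) K j)\<^sup>2)
          * (P $ i \<bullet> (second_moment M (\<lambda>\<omega>. \<xi> 1 \<omega> 0) *v P $ i)))"
proof -
  let ?X = "\<lambda>k \<omega>. \<xi> k \<omega> 0"
  note noise = iid_centered_fields_at_point[OF meas indep ident cen sq]
  have indX: "indep_vars (\<lambda>_. borel) ?X {1..<K}" by (rule indep_vars_subset[OF noise(1)]) auto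
  have moments: "integrable M (?X j)" "expectation (?X j) = 0" "integrable M (\<lambda>\<omega>. (norm (?X j \<omega>))\<^sup>2)"
    "second_moment M (?X j) = second_moment M (?X 1)" if "j \<in> {1..<K}" for j
  proof -
    from that have "j \<ge> 1" by simp
    from noise(3-6)[OF this] show "integrable M (?X j)" "expectation (?X j) = 0"
      "integrable M (\<lambda>\<omega>. (norm (?X j \<omega>))\<^sup>2)" "second_moment M (?X j) = second_moment M (?X 1)"
      by simp_all
  qed
  show ?thesis
    by (rule expectation_norm_square_eigencoords[OF P finite_atLeastLessThan
          msqrt_eta0_bar_coord[OF P H l, where xa = ?X] indX moments])
qed

theorem lemmaS3:
  fixes M :: "'a measure"
    and F :: "real^'n \<Rightarrow> real" and H :: "real^'n^'n" and b wstar :: "real^'n" and c :: real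
    and \<xi> :: "nat \<Rightarrow> 'a \<Rightarrow> (real^'n \<Rightarrow> real^'n)"
    and \<A> \<gamma> :: real and \<eta>0 :: "real^'n" and K :: nat
  assumes "prob_space M"
    and F_quad: "\<forall>w. F w = (1/2) * (w \<bullet> (H *v w)) + b \<bullet> w + c"
    and H_pd: "sym_pos_def H"
    and wstar_min: "\<forall>w. F wstar \<le> F w"
    and \<xi>_meas: "\<forall>k\<ge>1. \<xi> k \<in> measurable M (Pi\<^sub>M UNIV (\<lambda>_. borel))"
    and \<xi>_indep: "prob_space.indep_vars M (\<lambda>_. Pi\<^sub>M UNIV (\<lambda>_. borel)) \<xi> {1..}"
    and \<xi>_ident: "\<forall>k\<ge>1. distr M (Pi\<^sub>M UNIV (\<lambda>_. borel)) (\<xi> k) = distr M (Pi\<^sub>M UNIV (\<lambda>_. borel)) (\<xi> 1)"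
    and \<xi>_centered: "\<forall>k\<ge>1. \<forall>z. integrable M (\<lambda>\<omega>. \<xi> k \<omega> z) \<and> (\<integral>\<omega>. \<xi> k \<omega> z \<partial>M) = 0"
    and A_int: "integrable M (\<lambda>\<omega>. (norm (\<xi> 1 \<omega> 0))\<^sup>2)"
    and A_bound: "(\<integral>\<omega>. (norm (\<xi> 1 \<omega> 0))\<^sup>2 \<partial>M) \<le> \<A>"
    and "\<gamma> > 0" and "\<gamma> * trace H \<le> 1"
    and "K \<ge> 1"
  shows "sqrt (\<integral>\<omega>. (norm (msqrt H *v eta0_bar \<gamma> H (\<lambda>k \<omega>. \<xi> k \<omega> 0) \<eta>0 K \<omega>))\<^sup>2 \<partial>M)
    \<le> (1 / sqrt (real K)) *
       (min (norm (matrix_inv (msqrt H) *v \<eta>0) / (\<gamma> * sqrt (real K))) (norm \<eta>0 / sqrt \<gamma>)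
        + sqrt (trace ((\<chi> i j. \<integral>\<omega>. (\<xi> 1 \<omega> 0 $ i) * (\<xi> 1 \<omega> 0 $ j) \<partial>M) ** matrix_inv H)))"
proof -
  interpret prob_space M by fact
  obtain P l where P: "orthogonal_matrix P" and H: "H = spectral_fun P l (\<lambda>x. x)" and l: "\<And>i. 0 < l i"
    using sym_pos_def_spectral_decomposition[OF H_pd] by blast
  have step: "\<gamma> * l i \<le> 1" for i
  proof -
    have "\<gamma> * l i \<le> \<gamma> * trace H"
      unfolding H using spectral_fun_eigenvalue_le_trace[OF P] l \<open>\<gamma> > 0\<close> by (simp add: less_imp_le)
    thus ?thesis using \<open>\<gamma> * trace H \<le> 1\<close> by linarith
  qed
  let ?C = "second_moment M (\<lambda>\<omega>. \<xi> 1 \<omega> 0)"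
  have "0 \<le> P $ i \<bullet> (?C *v P $ i)" for i
    using iid_centered_fields_at_point(2,5)[OF \<xi>_meas \<xi>_indep \<xi>_ident \<xi>_centered A_int]
    by (intro second_moment_nonneg) simp_all
  moreover have "trace ((\<chi> i j. \<integral>\<omega>. (\<xi> 1 \<omega> 0 $ i) * (\<xi> 1 \<omega> 0 $ j) \<partial>M) ** matrix_inv H)
      = (\<Sum>i\<in>UNIV. (P $ i \<bullet> (?C *v P $ i)) / l i)"
    unfolding H using trace_mult_matrix_inv_spectral_fun[of P l, OF P l] by (simp add: second_moment_def)
  moreover note matrix_inv_msqrt_spectral_fun[of P l, OF P l, folded H]
    expectation_norm_square_msqrt_eta0_bar[OF P H less_imp_le[OF l]
      \<xi>_meas \<xi>_indep \<xi>_ident \<xi>_centered A_int]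
  ultimately show ?thesis
    using averaged_iterate_bound_eigen[of P l, OF P l step \<open>\<gamma> > 0\<close> \<open>K \<ge> 1\<close>] by simp
qed

end
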